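(* For integers $i\ge0$, $j\ge0$ and real $k$: (a) if $i\ge1$ and $j\ge1$, then $\sum_{r=0}^{j}(-1)^{j-r}b_{i,r,1}=b_{i,j+1,0}$; (b) $\sum_{r=0}^{i-1}(-1)^{i-1-r}b_{i,r,k}=i!+(-1)^{i-1}(k-1)^i$; (c) $\sum_{r=0}^{i}(-1)^{r}b_{i,r,k}=(k-1)^i$; (d) $\sum_{r=0}^{i}(-1)^{i-r}b_{i,r,0}=1$.
   Context: For integers $i\ge0$, $j\ge0$ and real $k$, $b_{i,j,k}=\sum_{r=0}^{j}\binom{j}{r}(-1)^{j-r}(r+k)^i$, with the convention $0^0=1$. *)

theory Defs
  imports Complex_Main
begin

text \<open>b i j k = sum over r from 0 to j of (j choose r) (-1)^(j-r) (r+k)^i, with 0^0 = 1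
  (Isabelle's power satisfies x^0 = 1 for all x).\<close>
definition b :: "nat \<Rightarrow> nat \<Rightarrow> real \<Rightarrow> real" where
  "b i j k = (\<Sum>r = 0..j. real (j choose r) * (-1) ^ (j - r) * (real r + k) ^ i)"

end

theory Submission imports Defs begin

(* b i j k is the j-th forward difference of x ^ i at x = k, so b i (Suc j) k = b i j (k + 1) - b i j k.
   Hence b i j k vanishes for j > i and equals i! for j = i, as for any polynomial of degree i
   with leading coefficient 1.  Writing b i r k = b i r (k - 1) + b i (Suc r) (k - 1), the
   alternating sums in (a) and (c) telescope; (b) and (d) are (c) with the top term i! split off,
   resp. with k = 0. *)

lemma sum_alternating_telescope:
  fixes f :: "nat \<Rightarrow> 'a::comm_ring_1"
  shows "(\<Sum>r = 0..n. (-1) ^ r * (f r + f (Suc r))) = f 0 + (-1) ^ n * f (Suc n)"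
  by (induction n) (simp_all add: algebra_simps)

lemma neg_one_power_diff:
  "r \<le> n \<Longrightarrow> (-1 :: 'a::ring_1) ^ (n - r) = (-1) ^ n * (-1) ^ r"
  by (simp flip: neg_one_power_add_eq_neg_one_power_diff power_add)

lemma neg_one_power_int_diff:
  "(-1 :: 'a::field) powi (m - n) = (-1) powi m * (-1) powi n"
  using power_int_add[of "-1::'a" m "-n"] by (simp add: power_int_minus_one_minus)

lemma sum_binomial_alternating_Suc:
  fixes g :: "nat \<Rightarrow> 'a::comm_ring_1"
  shows "(\<Sum>r = 0..Suc j. of_nat (Suc j choose r) * (-1) ^ (Suc j - r) * g r)
       = (\<Sum>r = 0..j. of_nat (j choose r) * (-1) ^ (j - r) * (g (Suc r) - g r))"
proof -
  let ?shifted = "\<Sum>r = 0..j. of_nat (j choose r) * (-1) ^ (j - r) * g (Suc r)"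
  let ?unshifted = "\<Sum>r = 0..j. of_nat (j choose r) * (-1) ^ (j - r) * g r"
  let ?tail = "\<Sum>r = 0..j. of_nat (j choose Suc r) * (-1) ^ (j - r) * g (Suc r)"
  have "(\<Sum>r = 0..Suc j. of_nat (Suc j choose r) * (-1) ^ (Suc j - r) * g r)
      = ?shifted + ((-1) ^ Suc j * g 0 + ?tail)"
    by (subst sum.atLeast0_atMost_Suc_shift) (simp add: algebra_simps sum.distrib)
  also have "(-1) ^ Suc j * g 0 + ?tail
      = (\<Sum>r = 0..Suc j. of_nat (j choose r) * (-1) ^ (Suc j - r) * g r)"
    by (subst sum.atLeast0_atMost_Suc_shift) simp
  also have "\<dots> = - ?unshifted"
    by (simp add: sum_negf[symmetric] Suc_diff_le binomial_eq_0)
  also have "?shifted + - ?unshifted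
      = (\<Sum>r = 0..j. of_nat (j choose r) * (-1) ^ (j - r) * (g (Suc r) - g r))"
    by (simp add: sum_subtractf right_diff_distrib)
  finally show ?thesis .
qed

lemma b_0: "b i 0 k = k ^ i"
  by (simp add: b_def)

lemma b_Suc: "b i (Suc j) k = b i j (k + 1) - b i j k"
proof -
  have "b i (Suc j) k
      = (\<Sum>r = 0..j. real (j choose r) * (-1) ^ (j - r) * ((real (Suc r) + k) ^ i - (real r + k) ^ i))"
    unfolding b_def by (rule sum_binomial_alternating_Suc)
  then show ?thesis
    unfolding b_def by (simp add: sum_subtractf right_diff_distrib ac_simps)
qed

lemma b_Suc_Suc: "b (Suc i) (Suc j) k = k * b i (Suc j) k + real (Suc j) * b i j (k + 1)"
proof -
  \<comment> \<open>(r + k) ^ Suc i = k (r + k) ^ i + r (r + k) ^ i, and r (Suc j choose r) = Suc j (j choose (r - 1))\<close>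
  have "b (Suc i) (Suc j) k
      = k * b i (Suc j) k
        + (\<Sum>r = 0..Suc j. real (Suc j choose r) * real r * (-1) ^ (Suc j - r) * (real r + k) ^ i)"
    unfolding b_def sum_distrib_left sum.distrib[symmetric]
    by (rule sum.cong) (simp_all add: algebra_simps)
  also have "(\<Sum>r = 0..Suc j. real (Suc j choose r) * real r * (-1) ^ (Suc j - r) * (real r + k) ^ i)
      = (\<Sum>r = 0..j. real (Suc j choose Suc r) * real (Suc r) * (-1) ^ (j - r) * (real r + (k + 1)) ^ i)"
    by (subst sum.atLeast0_atMost_Suc_shift) (simp add: algebra_simps)
  also have "\<dots> = real (Suc j) * b i j (k + 1)"
  proof -
    have "real (Suc j choose Suc r) * real (Suc r) = real (Suc j) * real (j choose r)" for r
      by (metis Suc_times_binomial_eq mult.commute of_nat_mult)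
    then show ?thesis
      unfolding b_def sum_distrib_left by (intro sum.cong refl) (simp only: mult.assoc)
  qed
  finally show ?thesis .
qed

lemma b_eq_0: "i < j \<Longrightarrow> b i j k = 0"
proof (induction i arbitrary: j k)
  case 0
  then obtain j' where "j = Suc j'"
    using gr0_conv_Suc by blast
  then show ?case
    using b_Suc[of 0 j' k] by (simp add: b_def)
next
  case (Suc i)
  then obtain j' where "j = Suc j'" and "i < j'"
    using Suc_lessE by blast
  then show ?case
    using Suc.IH by (simp add: b_Suc_Suc)
qed

lemma b_diag: "b i i k = fact i"
proof (induction i arbitrary: k)
  case 0
  then show ?case by (simp add: b_0)
next
  case (Suc i)
  then show ?case
    by (simp add: b_Suc_Suc b_eq_0)
qed

lemma sum_alternating_b: "(\<Sum>r = 0..i. (-1) ^ r * b i r k) = (k - 1) ^ i"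
proof -
  have "b i r k = b i r (k - 1) + b i (Suc r) (k - 1)" for r
    using b_Suc[of i r "k - 1"] by simp
  then have "(\<Sum>r = 0..i. (-1) ^ r * b i r k) = b i 0 (k - 1) + (-1) ^ i * b i (Suc i) (k - 1)"
    using sum_alternating_telescope[of "\<lambda>r. b i r (k - 1)"] by simp
  then show ?thesis
    by (simp add: b_0 b_eq_0)
qed

lemma sum_alternating_b_1:
  assumes "1 \<le> i"
  shows "(\<Sum>r = 0..j. (-1) ^ (j - r) * b i r 1) = b i (j + 1) 0"
proof -
  have "b i r 1 = b i r 0 + b i (Suc r) 0" for r
    using b_Suc[of i r 0] by simp
  then have "(\<Sum>r = 0..j. (-1) ^ (j - r) * b i r 1)
      = (-1) ^ j * (\<Sum>r = 0..j. (-1) ^ r * (b i r 0 + b i (Suc r) 0))"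
    by (simp add: sum_distrib_left neg_one_power_diff mult.assoc)
  also have "\<dots> = (-1) ^ j * ((-1) ^ j * b i (Suc j) 0)"
    using assms sum_alternating_telescope[of "\<lambda>r. b i r 0"] by (simp add: b_0 power_0_left)
  finally show ?thesis
    by (simp add: mult.assoc[symmetric] flip: power_add)
qed

lemma sum_alternating_b_lessThan:
  "(\<Sum>r<i. (-1) powi (int i - 1 - int r) * b i r k)
     = fact i + (-1) powi (int i - 1) * (k - 1) ^ i"
proof -
  \<comment> \<open>also for i = 0, since (-1) powi -1 = -1\<close>
  have sign: "(-1) powi (int i - 1) * (-1) ^ i = (-1 :: real)"
    by (simp add: neg_one_power_int_diff power_int_of_nat)
  have "(\<Sum>r<i. (-1) ^ r * b i r k) = (k - 1) ^ i - (-1) ^ i * fact i"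
    using sum_alternating_b[of i k] by (simp add: atLeast0AtMost lessThan_Suc_atMost[symmetric] b_diag)
  then have "(\<Sum>r<i. (-1) powi (int i - 1 - int r) * b i r k)
      = (-1) powi (int i - 1) * ((k - 1) ^ i - (-1) ^ i * fact i)"
    by (simp add: neg_one_power_int_diff power_int_of_nat sum_negf mult.assoc flip: sum_distrib_left)
  also have "\<dots> = fact i + (-1) powi (int i - 1) * (k - 1) ^ i"
    using sign by (simp add: algebra_simps)
  finally show ?thesis .
qed

theorem mainTheorem12:
  fixes i j :: nat and k :: real
  shows "(i \<ge> 1 \<and> j \<ge> 1 \<longrightarrow>
            (\<Sum>r = 0..j. (-1) ^ (j - r) * b i r 1) = b i (j + 1) 0)
       \<and> (\<Sum>r<i. (-1) powi (int i - 1 - int r) * b i r k)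
            = fact i + (-1) powi (int i - 1) * (k - 1) ^ i
       \<and> (\<Sum>r = 0..i. (-1) ^ r * b i r k) = (k - 1) ^ i
       \<and> (\<Sum>r = 0..i. (-1) ^ (i - r) * b i r 0) = 1"
proof (intro conjI impI)
  show "(\<Sum>r = 0..j. (-1) ^ (j - r) * b i r 1) = b i (j + 1) 0" if "i \<ge> 1 \<and> j \<ge> 1"
    using that by (simp add: sum_alternating_b_1)
  show "(\<Sum>r<i. (-1) powi (int i - 1 - int r) * b i r k)
      = fact i + (-1) powi (int i - 1) * (k - 1) ^ i"
    by (rule sum_alternating_b_lessThan)
  show "(\<Sum>r = 0..i. (-1) ^ r * b i r k) = (k - 1) ^ i"
    by (rule sum_alternating_b)
  have "(\<Sum>r = 0..i. (-1) ^ (i - r) * b i r 0) = (-1) ^ i * (\<Sum>r = 0..i. (-1) ^ r * b i r 0)"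
    by (simp add: sum_distrib_left neg_one_power_diff mult.assoc)
  then show "(\<Sum>r = 0..i. (-1) ^ (i - r) * b i r 0) = 1"
    by (simp add: sum_alternating_b flip: power_add)
qed

end
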